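(* Let $(\Omega,\mathcal{F},\mathsf{P})$ be atomless, let $u$ be a law invariant coherent utility on $L^0$ with determining set $\mathcal{D}$, and let $Y$ be a random vector. Then $\mathsf{E}(\mathcal{D}\mid Y)\subseteq\mathcal{D}$.
   Context: Let $(\Omega,\mathcal{F},\mathsf{P})$ be a probability space, $L^0$ the space of all real random variables, and $\mathcal{P}$ the set of probability measures on $\mathcal{F}$ absolutely continuous with respect to $\mathsf{P}$; measures are identified with their densities $Z=d\mathsf{Q}/d\mathsf{P}$. For $\mathsf{Q}\in\mathcal{P}$, $\mathsf{E}_\mathsf{Q}X:=\mathsf{E}_\mathsf{Q}X^+-\mathsf{E}_\mathsf{Q}X^-$ with the convention $\infty-\infty=-\infty$. A coherent utility on $L^0$ is a map $u:L^0\to[-\infty,\infty]$ of the form $u(X)=\inf_{\mathsf{Q}\in\mathcal{D}}\mathsf{E}_\mathsf{Q}X$ for a nonempty $\mathcal{D}\subseteq\mathcal{P}$; its determining set is the largest such set, $\{\mathsf{Q}\in\mathcal{P}:\mathsf{E}_\mathsf{Q}X\ge u(X)\ \forall X\in L^0\}$. $u$ is law invariant if $u(X)=u(X')$ whenever $X,X'$ have the same distribution. $\mathsf{E}(\mathcal{D}\mid Y):=\{\mathsf{E}(Z\mid Y):Z\in\mathcal{D}\}$. *)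

theory Defs
  imports "HOL-Probability.Probability"
begin

definition atomless :: "'a measure \<Rightarrow> bool" where
  "atomless M \<longleftrightarrow> (\<forall>A\<in>sets M. measure M A > 0 \<longrightarrow>
     (\<exists>B\<in>sets M. B \<subseteq> A \<and> 0 < measure M B \<and> measure M B < measure M A))"

text \<open>Densities dQ/dP of probability measures absolutely continuous w.r.t. P
  (identified with the measures; defined up to P-null sets).\<close>
definition densities :: "'a measure \<Rightarrow> ('a \<Rightarrow> real) set" where
  "densities M = {Z. Z \<in> borel_measurable M \<and> (AE x in M. 0 \<le> Z x) \<and>
                    integrable M Z \<and> integral\<^sup>L M Z = 1}"

text \<open>E_Q X = E_Q X^+ - E_Q X^-, with the convention \<infinity> - \<infinity> = -\<infinity>.\<close>
definition expQ :: "'a measure \<Rightarrow> ('a \<Rightarrow> real) \<Rightarrow> ('a \<Rightarrow> real) \<Rightarrow> ereal" where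
  "expQ M Z X =
     (let p = (\<integral>\<^sup>+ x. ennreal (Z x * max (X x) 0) \<partial>M);
          n = (\<integral>\<^sup>+ x. ennreal (Z x * max (- X x) 0) \<partial>M)
      in if n = \<infinity> then - \<infinity> else enn2ereal p - enn2ereal n)"

definition coherent_utility :: "'a measure \<Rightarrow> (('a \<Rightarrow> real) \<Rightarrow> ereal) \<Rightarrow> bool" where
  "coherent_utility M u \<longleftrightarrow> (\<exists>D. D \<noteq> {} \<and> D \<subseteq> densities M \<and>
     (\<forall>X\<in>borel_measurable M. u X = (INF Z\<in>D. expQ M Z X)))"

text \<open>Determining set: the largest set of measures representing u.\<close>
definition determining_set :: "'a measure \<Rightarrow> (('a \<Rightarrow> real) \<Rightarrow> ereal) \<Rightarrow> ('a \<Rightarrow> real) set" where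
  "determining_set M u = {Z \<in> densities M. \<forall>X\<in>borel_measurable M. u X \<le> expQ M Z X}"

definition law_invariant :: "'a measure \<Rightarrow> (('a \<Rightarrow> real) \<Rightarrow> ereal) \<Rightarrow> bool" where
  "law_invariant M u \<longleftrightarrow> (\<forall>X\<in>borel_measurable M. \<forall>X'\<in>borel_measurable M.
     distr M borel X = distr M borel X' \<longrightarrow> u X = u X')"

end

theory Submission
  imports Defs
begin

(*
  Fix Z in the determining set and let W = E(Z | G), where G is any sub-sigma-algebra, e.g. the
  one generated by Y.  Given X, atomlessness provides a rearrangement X' of X (a random variable
  with the same law) whose superlevel sets are, up to null sets, lower sets of Z: X' is large where
  Z is small.  By the bathtub principle such a lower set L carries at most as much Z-mass as any set
  A with P(A) = P(L) carries W-mass, because the W-mass of A is the Z-integral of E(1_A | G), a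
  function with values in [0, 1] and integral P(L).  The layer-cake formula turns this into
  E_Z X' <= E_W X, and law invariance gives u X = u X' <= E_Z X' <= E_W X, i.e. W is in the
  determining set.

  The rearrangement is X' = F_X^-1 (1 - U), where U is uniform on [0, 1] and nondecreasing in Z.
  U is read off a nested family of lower sets of Z with all dyadic probabilities, which exists by
  Sierpinski's theorem on atomless spaces.
*)

section \<open>Atomless probability spaces\<close>

context prob_space
begin

lemma atomless_half_subset:
  assumes "atomless M" and B: "B \<in> events" "0 < prob B"
  shows "\<exists>C\<in>events. C \<subseteq> B \<and> 0 < prob C \<and> prob C \<le> prob B / 2"
proof -
  obtain C where C: "C \<in> events" "C \<subseteq> B" "0 < prob C" "prob C < prob B"
    using \<open>atomless M\<close> B unfolding atomless_def by blast
  have "prob (B - C) = prob B - prob C"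
    using B C by (simp add: finite_measure_Diff)
  show ?thesis
  proof (cases "prob C \<le> prob B / 2")
    case True
    with C show ?thesis
      by blast
  next
    case False
    with B C \<open>prob (B - C) = prob B - prob C\<close> show ?thesis
      by (intro bexI[of _ "B - C"]) auto
  qed
qed

lemma atomless_small_subset:
  assumes "atomless M" and A: "A \<in> events" "0 < prob A" and "0 < e"
  shows "\<exists>B\<in>events. B \<subseteq> A \<and> 0 < prob B \<and> prob B < e"
proof -
  have "\<exists>B\<in>events. B \<subseteq> A \<and> 0 < prob B \<and> prob B \<le> prob A / 2 ^ n" for n
  proof (induction n)
    case 0
    then show ?case
      using A by auto
  next
    case (Suc n)
    then obtain B where B: "B \<in> events" "B \<subseteq> A" "0 < prob B" "prob B \<le> prob A / 2 ^ n"
      by blast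
    then obtain C where C: "C \<in> events" "C \<subseteq> B" "0 < prob C" "prob C \<le> prob B / 2"
      using atomless_half_subset[OF \<open>atomless M\<close>] by blast
    have "prob C \<le> prob A / 2 ^ n / 2"
      using B(4) C(4) by (simp add: divide_right_mono)
    with B C show ?case
      by (intro bexI[of _ C]) auto
  qed
  moreover obtain n where "(1 / 2 :: real) ^ n < e"
    using real_arch_pow_inv[OF \<open>0 < e\<close>, of "1 / 2"] by auto
  moreover have "prob A / 2 ^ n \<le> (1 / 2) ^ n"
    by (simp add: divide_right_mono power_one_over)
  ultimately show ?thesis
    by (meson le_less_trans order.trans)
qed

lemma exists_event_half_sup:
  assumes "S \<subseteq> events" and "S \<noteq> {}"
  shows "\<exists>C\<in>S. \<forall>C'\<in>S. prob C' \<le> 2 * prob C"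
proof -
  have bdd: "bdd_above (prob ` S)"
    by (intro bdd_aboveI[of _ 1]) auto
  have le_Sup: "prob C' \<le> Sup (prob ` S)" if "C' \<in> S" for C'
    using cSup_upper[OF _ bdd] that by simp
  show ?thesis
  proof (cases "Sup (prob ` S) \<le> 0")
    case True
    obtain C where "C \<in> S"
      using \<open>S \<noteq> {}\<close> by blast
    moreover have "prob C' \<le> 2 * prob C" if "C' \<in> S" for C'
      using le_Sup[OF that] True measure_nonneg[of M C] by linarith
    ultimately show ?thesis by blast
  next
    case False
    then obtain C where C: "C \<in> S" "Sup (prob ` S) / 2 < prob C"
      using less_cSup_iff[OF _ bdd, of "Sup (prob ` S) / 2"] \<open>S \<noteq> {}\<close> by auto
    have "prob C' \<le> 2 * prob C" if "C' \<in> S" for C'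
      using le_Sup[OF that] C(2) by linarith
    with C(1) show ?thesis by blast
  qed
qed

text \<open>Greedy exhaustion: each step adds a subset at least half as large as the largest admissible
  one, so the admissible sets left over in the limit are null.\<close>
lemma exists_saturated_subset:
  assumes A: "A \<in> events" and t: "0 \<le> t"
  shows "\<exists>B\<in>events. B \<subseteq> A \<and> prob B \<le> t \<and>
    (\<forall>C\<in>events. C \<subseteq> A - B \<and> prob B + prob C \<le> t \<longrightarrow> prob C = 0)"
proof -
  define admissible where "admissible B = {C \<in> events. C \<subseteq> A - B \<and> prob B + prob C \<le> t}" for B
  have "\<exists>C\<in>admissible B. \<forall>C'\<in>admissible B. prob C' \<le> 2 * prob C" if "prob B \<le> t" for B
    using that by (intro exists_event_half_sup) (auto simp: admissible_def intro!: exI[of _ "{}"])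
  then have "\<forall>B. \<exists>C. prob B \<le> t \<longrightarrow>
      C \<in> admissible B \<and> (\<forall>C'\<in>admissible B. prob C' \<le> 2 * prob C)"
    by blast
  then obtain pick where pick: "\<And>B. prob B \<le> t \<Longrightarrow>
      pick B \<in> admissible B \<and> (\<forall>C'\<in>admissible B. prob C' \<le> 2 * prob (pick B))"
    by (metis choice)
  define g where "g n = ((\<lambda>B. B \<union> pick B) ^^ n) {}" for n
  have g_Suc: "g (Suc n) = g n \<union> pick (g n)" for n
    unfolding g_def by simp
  have prob_g_Suc: "prob (g (Suc n)) = prob (g n) + prob (pick (g n))"
    if "prob (g n) \<le> t" "g n \<in> events" for n
    using that pick[of "g n"] unfolding g_Suc admissible_def by (intro finite_measure_Union) auto
  have g: "g n \<in> events \<and> g n \<subseteq> A \<and> prob (g n) \<le> t" for n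
  proof (induction n)
    case 0
    then show ?case using t by (simp add: g_def)
  next
    case (Suc n)
    then show ?case
      using pick[of "g n"] prob_g_Suc[of n] unfolding g_Suc admissible_def by auto
  qed
  define B where "B = (\<Union>n. g n)"
  have B: "B \<in> events" "B \<subseteq> A"
    using g unfolding B_def by auto
  have lim: "(\<lambda>n. prob (g n)) \<longlonglongrightarrow> prob B"
    unfolding B_def using g by (intro finite_Lim_measure_incseq) (auto simp: incseq_Suc_iff g_Suc)
  then have "(\<lambda>n. prob (g (Suc n)) - prob (g n)) \<longlonglongrightarrow> prob B - prob B"
    by (intro tendsto_diff LIMSEQ_Suc)
  then have pick_lim: "(\<lambda>n. prob (pick (g n))) \<longlonglongrightarrow> 0"
    using prob_g_Suc g by simp
  have "prob C = 0" if C: "C \<in> events" "C \<subseteq> A - B" "prob B + prob C \<le> t" for C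
  proof -
    have gB: "prob (g n) \<le> prob B" for n
      using B g unfolding B_def by (intro finite_measure_mono) auto
    have adm: "C \<in> admissible (g n)" for n
      using C gB[of n] unfolding admissible_def B_def by auto
    have C_le: "prob C / 2 \<le> prob (pick (g n))" for n
    proof -
      have "prob C \<le> 2 * prob (pick (g n))"
        using pick[of "g n"] g[of n] adm[of n] by blast
      then show ?thesis
        by simp
    qed
    have "\<exists>N. \<forall>n\<ge>N. prob C / 2 \<le> prob (pick (g n))"
      by (intro exI[of _ 0] allI impI C_le)
    then have "prob C / 2 \<le> 0"
      by (rule LIMSEQ_le_const[OF pick_lim])
    then show ?thesis
      using measure_nonneg[of M C] by linarith
  qed
  moreover have "prob B \<le> t"
    using lim g by (intro LIMSEQ_le_const2) auto
  ultimately show ?thesis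
    using B by blast
qed

lemma atomless_subset_prob_eq:
  assumes "atomless M" and A: "A \<in> events" and t: "0 \<le> t" "t \<le> prob A"
  shows "\<exists>B\<in>events. B \<subseteq> A \<and> prob B = t"
proof -
  obtain B where B: "B \<in> events" "B \<subseteq> A" "prob B \<le> t"
    and saturated: "\<And>C. C \<in> events \<Longrightarrow> C \<subseteq> A - B \<Longrightarrow> prob B + prob C \<le> t \<Longrightarrow> prob C = 0"
    using exists_saturated_subset[OF A t(1)] by blast
  have "\<not> prob B < t"
  proof
    assume "prob B < t"
    moreover have "prob (A - B) = prob A - prob B"
      using A B by (simp add: finite_measure_Diff)
    ultimately obtain C where C: "C \<in> events" "C \<subseteq> A - B" "0 < prob C" "prob C < t - prob B"
      using atomless_small_subset[OF \<open>atomless M\<close>, of "A - B" "t - prob B"] A B t by auto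
    then have "prob C = 0"
      using saturated[OF C(1,2)] by simp
    with C(3) show False
      by simp
  qed
  with B show ?thesis
    by (intro bexI[of _ B]) auto
qed

end

section \<open>Quantiles\<close>

text \<open>Meaningful for \<open>0 < p < measure M (space M)\<close>; otherwise the infimum is taken of an
  empty or unbounded set.\<close>
definition quantile :: "real measure \<Rightarrow> real \<Rightarrow> real" where
  "quantile M p = Inf {t. p \<le> cdf M t}"

context finite_borel_measure
begin

lemma quantile_le_iff:
  assumes "0 < p" and "p < measure M (space M)"
  shows "quantile M p \<le> t \<longleftrightarrow> p \<le> cdf M t"
proof -
  define S where "S = {t. p \<le> cdf M t}"
  obtain a where "p \<le> cdf M a"
    using order_tendstoD(1)[OF cdf_lim_at_top assms(2)]
    by (auto simp: eventually_at_top_linorder intro: less_imp_le)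
  then have ne: "S \<noteq> {}"
    unfolding S_def by blast
  obtain b where b: "cdf M b < p"
    using order_tendstoD(2)[OF cdf_lim_at_bot assms(1)] by (auto simp: eventually_at_bot_linorder)
  have "b \<le> s" if "s \<in> S" for s
    using that b cdf_nondecreasing[of s b] unfolding S_def by force
  then have bdd: "bdd_below S"
    by (rule bdd_belowI)
  have "p \<le> cdf M t" if "quantile M p \<le> t"
  proof (rule tendsto_lowerbound)
    show "(cdf M \<longlongrightarrow> cdf M t) (at_right t)"
      using cdf_is_right_cont by (simp add: continuous_within)
    show "\<forall>\<^sub>F s in at_right t. p \<le> cdf M s"
    proof (rule eventually_at_rightI[where b = "t + 1"])
      fix s assume "s \<in> {t<..<t + 1}"
      then have "Inf S < s"
        using that unfolding quantile_def S_def[symmetric] by simp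
      then obtain s' where "s' \<in> S" "s' < s"
        using cInf_less_iff[OF ne bdd] by blast
      then show "p \<le> cdf M s"
        using cdf_nondecreasing[of s' s] unfolding S_def by simp
    qed simp
  qed simp
  moreover have "quantile M p \<le> t" if "p \<le> cdf M t"
    unfolding quantile_def S_def[symmetric] using that bdd
    by (intro cInf_lower) (simp_all add: S_def)
  ultimately show ?thesis
    by blast
qed

lemma measure_lessThan_quantile_le:
  assumes "0 < p" and "p < measure M (space M)"
  shows "measure M {..<quantile M p} \<le> p"
proof (rule tendsto_upperbound)
  show "(cdf M \<longlongrightarrow> measure M {..<quantile M p}) (at_left (quantile M p))"
    by (rule cdf_at_left)
  show "\<forall>\<^sub>F s in at_left (quantile M p). cdf M s \<le> p"
  proof (rule eventually_at_leftI[where a = "quantile M p - 1"])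
    fix s assume "s \<in> {quantile M p - 1<..<quantile M p}"
    then show "cdf M s \<le> p"
      using quantile_le_iff[OF assms, of s] by auto
  qed simp
qed simp

end

context prob_space
begin

lemma exists_quantile_level:
  fixes Z :: "'a \<Rightarrow> real"
  assumes Z[measurable]: "Z \<in> borel_measurable M" and D: "D \<in> events"
    and p: "0 < p" "p < prob D"
  shows "\<exists>d. prob {x\<in>D. Z x < d} \<le> p \<and> p \<le> prob {x\<in>D. Z x \<le> d}"
proof -
  define \<nu> where "\<nu> = distr (restrict_space M D) borel Z"
  have Z_D: "Z \<in> restrict_space M D \<rightarrow>\<^sub>M borel"
    by (rule measurable_restrict_space1) simp
  have D_sub: "D \<subseteq> space M"
    using D sets.sets_into_space by blast
  have "finite_measure \<nu>"
    unfolding \<nu>_def using D Z_D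
    by (intro finite_measure.finite_measure_distr finite_measure_restrict_space)
      (simp_all add: finite_measure_axioms)
  then interpret \<nu>: finite_borel_measure \<nu>
    by (intro finite_borel_measure.intro) (simp_all add: finite_borel_measure_axioms_def \<nu>_def)
  have \<nu>_eq: "measure \<nu> B = prob {x\<in>D. Z x \<in> B}" if "B \<in> sets borel" for B
  proof -
    have "measure \<nu> B = measure (restrict_space M D) (Z -` B \<inter> D)"
      unfolding \<nu>_def using that Z_D D_sub
      by (simp add: measure_distr space_restrict_space Int_absorb2)
    also have "\<dots> = prob {x\<in>D. Z x \<in> B}"
      using D D_sub by (subst measure_restrict_space) (auto intro!: arg_cong[where f=prob])
    finally show ?thesis .
  qed
  have "measure \<nu> (space \<nu>) = prob D"
    using \<nu>_eq[of UNIV] by (simp add: \<nu>.borel_UNIV)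
  then have "measure \<nu> {..<quantile \<nu> p} \<le> p" "p \<le> cdf \<nu> (quantile \<nu> p)"
    using p \<nu>.measure_lessThan_quantile_le \<nu>.quantile_le_iff by auto
  then show ?thesis
    using \<nu>_eq by (auto simp: cdf_def)
qed

end

section \<open>Lower sets\<close>

definition lower_set :: "'a measure \<Rightarrow> ('a \<Rightarrow> real) \<Rightarrow> 'a set \<Rightarrow> bool" where
  "lower_set M Z L \<longleftrightarrow> L \<subseteq> space M \<and> (\<forall>x\<in>L. \<forall>y\<in>space M - L. Z x \<le> Z y)"

lemma lower_set_sublevel:
  fixes U :: "'a \<Rightarrow> real"
  assumes "\<And>x y. x \<in> space M \<Longrightarrow> y \<in> space M \<Longrightarrow> Z x < Z y \<Longrightarrow> U x \<le> U y"
  shows "lower_set M Z {x\<in>space M. U x < c}"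
proof -
  have "Z x \<le> Z y" if "x \<in> space M" "U x < c" "y \<in> space M" "\<not> U y < c" for x y
  proof (rule ccontr)
    assume "\<not> Z x \<le> Z y"
    with assms[of y x] that have "U y \<le> U x"
      by simp
    with that show False
      by linarith
  qed
  then show ?thesis
    unfolding lower_set_def by auto
qed

lemma lower_set_INT:
  assumes "\<And>n::nat. lower_set M Z (L n)"
  shows "lower_set M Z (\<Inter>n. L n)"
  using assms unfolding lower_set_def by blast

lemma lower_set_Un_sublevel:
  assumes L: "lower_set M Z L" and L': "lower_set M Z L'" and "L \<subseteq> L'"
    and B: "B \<subseteq> {x\<in>L' - L. Z x = d}"
  shows "lower_set M Z (L \<union> {x\<in>L' - L. Z x < d} \<union> B)"
  unfolding lower_set_def
proof (intro conjI ballI)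
  show "L \<union> {x\<in>L' - L. Z x < d} \<union> B \<subseteq> space M"
    using L' \<open>L \<subseteq> L'\<close> B unfolding lower_set_def by auto
next
  fix x y assume x: "x \<in> L \<union> {x\<in>L' - L. Z x < d} \<union> B"
    and y: "y \<in> space M - (L \<union> {x\<in>L' - L. Z x < d} \<union> B)"
  show "Z x \<le> Z y"
  proof (cases "y \<in> L'")
    case False
    then show ?thesis
      using L' x y \<open>L \<subseteq> L'\<close> B unfolding lower_set_def by auto
  next
    case True
    then have "y \<notin> L" "d \<le> Z y"
      using y by auto
    then show ?thesis
      using L x y B unfolding lower_set_def by auto
  qed
qed

context prob_space
begin

lemma lower_set_between:
  fixes Z :: "'a \<Rightarrow> real"
  assumes "atomless M" and Z[measurable]: "Z \<in> borel_measurable M"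
    and L: "L \<in> events" "lower_set M Z L" and L': "L' \<in> events" "lower_set M Z L'"
    and "L \<subseteq> L'" and t: "prob L \<le> t" "t \<le> prob L'"
  shows "\<exists>N\<in>events. lower_set M Z N \<and> L \<subseteq> N \<and> N \<subseteq> L' \<and> prob N = t"
proof -
  define D where "D = L' - L"
  have D: "D \<in> events"
    unfolding D_def using L L' by auto
  have "prob D = prob L' - prob L"
    unfolding D_def using L L' \<open>L \<subseteq> L'\<close> by (simp add: finite_measure_Diff' Int_absorb1)
  consider "t = prob L" | "t = prob L'" | "prob L < t" "t < prob L'"
    using t by linarith
  then show ?thesis
  proof cases
    case 3
    with \<open>prob D = prob L' - prob L\<close> obtain d
      where d: "prob {x\<in>D. Z x < d} \<le> t - prob L" "t - prob L \<le> prob {x\<in>D. Z x \<le> d}"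
      using exists_quantile_level[OF Z D, of "t - prob L"] by auto
    define D_below where "D_below = {x\<in>D. Z x < d}"
    define E where "E = {x\<in>D. Z x = d}"
    have E: "E \<in> events" and D_below: "D_below \<in> events"
      unfolding E_def D_below_def using D by measurable
    have "prob {x\<in>D. Z x \<le> d} = prob D_below + prob E"
      unfolding E_def D_below_def using D
      by (subst finite_measure_Union[symmetric]) (auto intro!: arg_cong[where f=prob])
    with d obtain B where B: "B \<in> events" "B \<subseteq> E" "prob B = t - prob L - prob D_below"
      using atomless_subset_prob_eq[OF \<open>atomless M\<close> E, of "t - prob L - prob D_below"]
      unfolding D_below_def by auto
    define N where "N = L \<union> D_below \<union> B"
    have disj: "L \<inter> D = {}" "D_below \<inter> E = {}" "D_below \<subseteq> D" "E \<subseteq> D"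
      unfolding D_def D_below_def E_def by auto
    have "prob N = prob (L \<union> D_below) + prob B"
      unfolding N_def using L D_below B disj by (intro finite_measure_Union) auto
    also have "prob (L \<union> D_below) = prob L + prob D_below"
      using L D_below disj by (intro finite_measure_Union) auto
    finally have "prob N = t"
      using B by simp
    moreover have "lower_set M Z N"
      unfolding N_def D_below_def D_def
      using lower_set_Un_sublevel[OF L(2) L'(2) \<open>L \<subseteq> L'\<close>] B(2) unfolding E_def D_def by blast
    moreover have "N \<in> events" "L \<subseteq> N" "N \<subseteq> L'"
      unfolding N_def using L D_below B disj \<open>L \<subseteq> L'\<close> by (auto simp: D_def)
    ultimately show ?thesis
      by blast
  qed (use L L' \<open>L \<subseteq> L'\<close> in auto)
qed

end

section \<open>A uniform rank nondecreasing in \<open>Z\<close>\<close>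

lemma dyadic_approx_below:
  fixes a :: real
  assumes "0 < a" and "a \<le> 1"
  defines "k n \<equiv> nat (\<lceil>a * 2 ^ n\<rceil> - 1)"
  shows "k n \<le> 2 ^ n" and "real (k n) / 2 ^ n < a" and "real k' / 2 ^ n < a \<Longrightarrow> k' \<le> k n"
    and "(\<lambda>n. real (k n) / 2 ^ n) \<longlonglongrightarrow> a"
proof -
  have k: "real (k n) < a * 2 ^ n" "a * 2 ^ n \<le> real (k n) + 1" for n
  proof -
    have "0 < a * 2 ^ n"
      using \<open>0 < a\<close> by simp
    then have "real (k n) = of_int \<lceil>a * 2 ^ n\<rceil> - 1"
      unfolding k_def by simp
    then show "real (k n) < a * 2 ^ n" "a * 2 ^ n \<le> real (k n) + 1"
      by linarith+
  qed
  have "a * 2 ^ n \<le> 2 ^ n"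
    using \<open>a \<le> 1\<close> by (simp add: mult_le_cancel_right2)
  then have "real (k n) \<le> 2 ^ n"
    using k(1)[of n] by linarith
  then show "k n \<le> 2 ^ n"
    by simp
  show "real (k n) / 2 ^ n < a" for n
    using k(1) by (simp add: pos_divide_less_eq)
  show "k' \<le> k n" if "real k' / 2 ^ n < a"
    using that k(2)[of n] by (simp add: divide_less_eq)
  show "(\<lambda>n. real (k n) / 2 ^ n) \<longlonglongrightarrow> a"
  proof (rule tendsto_sandwich[where f = "\<lambda>n. a - (1 / 2) ^ n" and h = "\<lambda>n. a"])
    have "a - (1 / 2) ^ n \<le> real (k n) / 2 ^ n" for n
    proof -
      have "(a - (1 / 2) ^ n) * 2 ^ n = a * 2 ^ n - 1"
        by (simp add: algebra_simps power_one_over)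
      then show ?thesis
        using k(2)[of n] by (simp add: pos_le_divide_eq)
    qed
    then show "\<forall>\<^sub>F n in sequentially. a - (1 / 2) ^ n \<le> real (k n) / 2 ^ n"
      by (intro always_eventually allI)
    have "real (k n) / 2 ^ n \<le> a" for n
      using k(1)[of n] by (simp add: pos_divide_le_eq)
    then show "\<forall>\<^sub>F n in sequentially. real (k n) / 2 ^ n \<le> a"
      by (intro always_eventually allI)
    have "(\<lambda>n. (1 / 2 :: real) ^ n) \<longlonglongrightarrow> 0"
      by (rule LIMSEQ_power_zero) simp
    from tendsto_diff[OF tendsto_const this, of a]
    show "(\<lambda>n. a - (1 / 2) ^ n) \<longlonglongrightarrow> a"
      by simp
  qed simp
qed

definition intermediate_lower_set ::
    "'a measure \<Rightarrow> ('a \<Rightarrow> real) \<Rightarrow> 'a set \<Rightarrow> 'a set \<Rightarrow> real \<Rightarrow> 'a set" where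
  "intermediate_lower_set M Z L L' t =
    (SOME N. N \<in> sets M \<and> lower_set M Z N \<and> L \<subseteq> N \<and> N \<subseteq> L' \<and> measure M N = t)"

primrec dyadic_lower_set :: "'a measure \<Rightarrow> ('a \<Rightarrow> real) \<Rightarrow> nat \<Rightarrow> nat \<Rightarrow> 'a set" where
  "dyadic_lower_set M Z 0 k = (if k = 0 then {} else space M)"
| "dyadic_lower_set M Z (Suc n) k =
    (if even k then dyadic_lower_set M Z n (k div 2)
     else intermediate_lower_set M Z (dyadic_lower_set M Z n (k div 2))
       (dyadic_lower_set M Z n (Suc (k div 2))) (real k / 2 ^ Suc n))"

text \<open>The dyadic lower sets split the atoms of the law of \<open>Z\<close>, which makes \<open>lower_rank M Z\<close>
  uniformly distributed.\<close>
definition lower_rank :: "'a measure \<Rightarrow> ('a \<Rightarrow> real) \<Rightarrow> 'a \<Rightarrow> real" where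
  "lower_rank M Z x = Inf {real k / 2 ^ n | n k. k \<le> 2 ^ n \<and> x \<in> dyadic_lower_set M Z n k}"

context prob_space
begin

lemma intermediate_lower_set:
  fixes Z :: "'a \<Rightarrow> real"
  assumes "atomless M" and "Z \<in> borel_measurable M"
    and "L \<in> events" "lower_set M Z L" and "L' \<in> events" "lower_set M Z L'"
    and "L \<subseteq> L'" and "prob L \<le> t" "t \<le> prob L'"
  shows "intermediate_lower_set M Z L L' t \<in> events \<and>
    lower_set M Z (intermediate_lower_set M Z L L' t) \<and>
    L \<subseteq> intermediate_lower_set M Z L L' t \<and> intermediate_lower_set M Z L L' t \<subseteq> L' \<and>
    prob (intermediate_lower_set M Z L L' t) = t"
  using someI_ex[OF lower_set_between[OF assms, unfolded Bex_def]]
  unfolding intermediate_lower_set_def .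

lemma dyadic_lower_set_odd:
  fixes Z :: "'a \<Rightarrow> real"
  assumes "atomless M" and "Z \<in> borel_measurable M" and "odd k"
    and lower: "dyadic_lower_set M Z n (k div 2) \<in> events"
      "lower_set M Z (dyadic_lower_set M Z n (k div 2))"
      "prob (dyadic_lower_set M Z n (k div 2)) = real (k div 2) / 2 ^ n"
    and upper: "dyadic_lower_set M Z n (Suc (k div 2)) \<in> events"
      "lower_set M Z (dyadic_lower_set M Z n (Suc (k div 2)))"
      "prob (dyadic_lower_set M Z n (Suc (k div 2))) = real (Suc (k div 2)) / 2 ^ n"
    and nested: "dyadic_lower_set M Z n (k div 2) \<subseteq> dyadic_lower_set M Z n (Suc (k div 2))"
  shows "dyadic_lower_set M Z (Suc n) k \<in> events \<and> lower_set M Z (dyadic_lower_set M Z (Suc n) k) \<and>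
    dyadic_lower_set M Z n (k div 2) \<subseteq> dyadic_lower_set M Z (Suc n) k \<and>
    dyadic_lower_set M Z (Suc n) k \<subseteq> dyadic_lower_set M Z n (Suc (k div 2)) \<and>
    prob (dyadic_lower_set M Z (Suc n) k) = real k / 2 ^ Suc n"
proof -
  obtain j where "k = 2 * j + 1"
    using \<open>odd k\<close> by (rule oddE)
  then have "real (k div 2) / 2 ^ n \<le> real k / 2 ^ Suc n"
      "real k / 2 ^ Suc n \<le> real (Suc (k div 2)) / 2 ^ n"
    by (simp_all add: field_simps)
  then show ?thesis
    using intermediate_lower_set[OF assms(1,2) lower(1,2) upper(1,2) nested,
        of "real k / 2 ^ Suc n"] lower(3) upper(3) \<open>odd k\<close>
    by simp
qed

lemma dyadic_lower_set:
  fixes Z :: "'a \<Rightarrow> real"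
  assumes "atomless M" and Z: "Z \<in> borel_measurable M"
  shows "(\<forall>k \<le> 2 ^ n. dyadic_lower_set M Z n k \<in> events \<and> lower_set M Z (dyadic_lower_set M Z n k) \<and>
            prob (dyadic_lower_set M Z n k) = real k / 2 ^ n) \<and>
         (\<forall>k < 2 ^ n. dyadic_lower_set M Z n k \<subseteq> dyadic_lower_set M Z n (Suc k))"
proof (induction n)
  case 0
  have "k \<le> 1 \<Longrightarrow> k = 0 \<or> k = 1" for k :: nat
    by auto
  then show ?case
    by (auto simp: lower_set_def prob_space)
next
  case (Suc n)
  let ?L = "dyadic_lower_set M Z"
  have odd: "?L (Suc n) k \<in> events \<and> lower_set M Z (?L (Suc n) k) \<and>
      ?L n (k div 2) \<subseteq> ?L (Suc n) k \<and> ?L (Suc n) k \<subseteq> ?L n (Suc (k div 2)) \<and>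
      prob (?L (Suc n) k) = real k / 2 ^ Suc n"
    if k: "odd k" "k < 2 ^ Suc n" for k
  proof -
    obtain j where "k = 2 * j + 1"
      using k(1) by (rule oddE)
    with k(2) have j: "k div 2 < 2 ^ n"
      by simp
    then show ?thesis
      using Suc.IH
      by (intro dyadic_lower_set_odd[OF \<open>atomless M\<close> Z k(1)]) (auto simp del: of_nat_Suc)
  qed
  have "?L (Suc n) k \<in> events \<and> lower_set M Z (?L (Suc n) k) \<and>
      prob (?L (Suc n) k) = real k / 2 ^ Suc n"
    if k: "k \<le> 2 ^ Suc n" for k
  proof (cases "even k")
    case True
    with k Suc.IH show ?thesis
      by (auto simp: field_simps elim!: evenE)
  next
    case False
    with k have "k < 2 ^ Suc n"
      by (cases "k = 2 ^ Suc n") auto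
    with False odd show ?thesis
      by blast
  qed
  moreover have "?L (Suc n) k \<subseteq> ?L (Suc n) (Suc k)" if k: "k < 2 ^ Suc n" for k
  proof (cases "even k")
    case True
    have "Suc k \<noteq> 2 ^ Suc n"
    proof
      assume "Suc k = 2 ^ Suc n"
      then have "even (Suc k)"
        by simp
      with True show False
        by simp
    qed
    then have "Suc k < 2 ^ Suc n"
      using k by (simp add: Suc_lessI)
    with True odd[of "Suc k"] show ?thesis
      by simp
  next
    case False
    with odd[OF _ k] show ?thesis
      by simp
  qed
  ultimately show ?case
    by blast
qed

lemma dyadic_lower_set_mono:
  fixes Z :: "'a \<Rightarrow> real"
  assumes "atomless M" and "Z \<in> borel_measurable M" and "k \<le> k'" "k' \<le> 2 ^ n"
  shows "dyadic_lower_set M Z n k \<subseteq> dyadic_lower_set M Z n k'"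
  using \<open>k \<le> k'\<close> \<open>k' \<le> 2 ^ n\<close>
proof (induction k' rule: dec_induct)
  case (step i)
  then have "dyadic_lower_set M Z n i \<subseteq> dyadic_lower_set M Z n (Suc i)"
    using dyadic_lower_set[OF assms(1,2), of n] by simp
  with step show ?case
    by simp
qed simp

lemma lower_rank_less_iff:
  assumes "x \<in> space M"
  shows "lower_rank M Z x < a \<longleftrightarrow>
    (\<exists>n k. k \<le> 2 ^ n \<and> x \<in> dyadic_lower_set M Z n k \<and> real k / 2 ^ n < a)"
proof -
  define S where "S = {real k / 2 ^ n | n k. k \<le> 2 ^ n \<and> x \<in> dyadic_lower_set M Z n k}"
  have "1 \<in> S"
    unfolding S_def using assms by (auto intro!: exI[of _ 0] exI[of _ 1])
  moreover have "bdd_below S"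
    unfolding S_def by (auto intro!: bdd_belowI[of _ 0])
  ultimately have "lower_rank M Z x < a \<longleftrightarrow> (\<exists>s\<in>S. s < a)"
    unfolding lower_rank_def S_def[symmetric] by (intro cInf_less_iff) auto
  then show ?thesis
    unfolding S_def by blast
qed

lemma lower_rank_mono:
  fixes Z :: "'a \<Rightarrow> real"
  assumes "atomless M" and "Z \<in> borel_measurable M"
    and "x \<in> space M" "y \<in> space M" "Z x < Z y"
  shows "lower_rank M Z x \<le> lower_rank M Z y"
proof (rule ccontr)
  assume "\<not> ?thesis"
  then have "lower_rank M Z y < lower_rank M Z x"
    by simp
  then obtain n k where k: "k \<le> 2 ^ n" "y \<in> dyadic_lower_set M Z n k"
    "real k / 2 ^ n < lower_rank M Z x"
    using lower_rank_less_iff[OF \<open>y \<in> space M\<close>] by blast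
  have "x \<in> dyadic_lower_set M Z n k"
  proof (rule ccontr)
    assume "x \<notin> dyadic_lower_set M Z n k"
    then have "Z y \<le> Z x"
      using dyadic_lower_set[OF assms(1,2), of n] k(1,2) \<open>x \<in> space M\<close>
      unfolding lower_set_def by blast
    with \<open>Z x < Z y\<close> show False
      by simp
  qed
  with k show False
    using lower_rank_less_iff[OF \<open>x \<in> space M\<close>] by auto
qed

lemma lower_rank_measurable:
  fixes Z :: "'a \<Rightarrow> real"
  assumes "atomless M" and "Z \<in> borel_measurable M"
  shows "lower_rank M Z \<in> borel_measurable M"
proof (rule borel_measurableI_less)
  fix a
  have sub: "dyadic_lower_set M Z n k \<subseteq> space M" if "k \<le> 2 ^ n" for n k
    using dyadic_lower_set[OF assms, of n] that unfolding lower_set_def by blast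
  have "{x\<in>space M. lower_rank M Z x < a} =
      {x\<in>space M. \<exists>n k. k \<le> 2 ^ n \<and> x \<in> dyadic_lower_set M Z n k \<and> real k / 2 ^ n < a}"
    using lower_rank_less_iff by blast
  also have "\<dots> = (\<Union>n. \<Union>k\<in>{k. k \<le> 2 ^ n \<and> real k / 2 ^ n < a}. dyadic_lower_set M Z n k)"
    using sub by blast
  also have "\<dots> \<in> events"
    using dyadic_lower_set[OF assms] by (intro sets.countable_UN sets.finite_UN) auto
  finally show "{x\<in>space M. lower_rank M Z x < a} \<in> events" .
qed

lemma prob_lower_rank_less:
  fixes Z :: "'a \<Rightarrow> real"
  assumes "atomless M" and "Z \<in> borel_measurable M" and "0 < a" "a \<le> 1"
  shows "prob {x\<in>space M. lower_rank M Z x < a} = a"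
proof -
  let ?L = "dyadic_lower_set M Z"
  define k where "k n = nat (\<lceil>a * 2 ^ n\<rceil> - 1)" for n
  note k = dyadic_approx_below[OF \<open>0 < a\<close> \<open>a \<le> 1\<close>, folded k_def]
  have level: "?L n (k n) \<in> events" "prob (?L n (k n)) = real (k n) / 2 ^ n" for n
    using dyadic_lower_set[OF assms(1,2), of n] k(1) by blast+
  have "{x\<in>space M. lower_rank M Z x < a} = (\<Union>n. ?L n (k n))"
  proof (intro equalityI subsetI)
    fix x assume "x \<in> {x\<in>space M. lower_rank M Z x < a}"
    then obtain n k' where "k' \<le> 2 ^ n" "x \<in> ?L n k'" "real k' / 2 ^ n < a"
      using lower_rank_less_iff by blast
    then show "x \<in> (\<Union>n. ?L n (k n))"
      using dyadic_lower_set_mono[OF assms(1,2) k(3) k(1)] by blast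
  next
    fix x assume "x \<in> (\<Union>n. ?L n (k n))"
    then show "x \<in> {x\<in>space M. lower_rank M Z x < a}"
      using lower_rank_less_iff level(1) k(1,2) sets.sets_into_space by blast
  qed
  moreover have "(\<lambda>n. prob (?L n (k n))) \<longlonglongrightarrow> prob (\<Union>n. ?L n (k n))"
  proof (intro finite_Lim_measure_incseq incseq_SucI)
    fix n
    have "?L n (k n) = ?L (Suc n) (2 * k n)"
      by simp
    also have "\<dots> \<subseteq> ?L (Suc n) (k (Suc n))"
      using k(2)[of n] by (intro dyadic_lower_set_mono[OF assms(1,2)] k(3) k(1)) simp
    finally show "?L n (k n) \<subseteq> ?L (Suc n) (k (Suc n))" .
  qed (use level in auto)
  moreover have "(\<lambda>n. prob (?L n (k n))) \<longlonglongrightarrow> a"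
    unfolding level(2) by (rule k(4))
  ultimately show ?thesis
    using LIMSEQ_unique[of "\<lambda>n. prob (?L n (k n))"] by simp
qed

end

section \<open>Counter-monotone rearrangements\<close>

context prob_space
begin

lemma uniform_unit_interval:
  fixes U :: "'a \<Rightarrow> real"
  assumes [measurable]: "U \<in> borel_measurable M"
    and U_unif: "\<And>a. 0 < a \<Longrightarrow> a \<le> 1 \<Longrightarrow> prob {x\<in>space M. U x < a} = a"
  shows "\<And>a. 0 \<le> a \<Longrightarrow> a \<le> 1 \<Longrightarrow> prob {x\<in>space M. U x < a} = a"
    and "AE x in M. 0 < U x \<and> U x < 1"
proof -
  have small: "prob {x\<in>space M. U x \<le> 0} \<le> 0 + e" if "0 < e" for e
  proof -
    have "prob {x\<in>space M. U x \<le> 0} \<le> prob {x\<in>space M. U x < min e 1}"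
      using that by (intro finite_measure_mono) auto
    then show ?thesis
      using U_unif[of "min e 1"] that by simp
  qed
  have "prob {x\<in>space M. U x \<le> 0} \<le> 0"
    by (rule field_le_epsilon) (rule small)
  then have U_le_0: "prob {x\<in>space M. U x \<le> 0} = 0"
    using measure_nonneg[of M "{x\<in>space M. U x \<le> 0}"] by linarith
  show prob_U_less: "prob {x\<in>space M. U x < a} = a" if "0 \<le> a" "a \<le> 1" for a
  proof (cases "a = 0")
    case True
    have "prob {x\<in>space M. U x < a} \<le> prob {x\<in>space M. U x \<le> 0}"
      using True by (intro finite_measure_mono) auto
    with True U_le_0 show ?thesis
      using measure_nonneg[of M "{x\<in>space M. U x < a}"] by linarith
  qed (use that U_unif in simp)
  have "{x\<in>space M. 1 \<le> U x} = space M - {x\<in>space M. U x < 1}"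
    by auto
  then have "prob {x\<in>space M. 1 \<le> U x} = 0"
    using prob_U_less[of 1] by (simp add: prob_compl)
  with U_le_0 have "AE x in M. x \<notin> {x\<in>space M. U x \<le> 0}" "AE x in M. x \<notin> {x\<in>space M. 1 \<le> U x}"
    by (simp_all add: prob_eq_0)
  then show "AE x in M. 0 < U x \<and> U x < 1"
    using AE_space by eventually_elim auto
qed

lemma prob_greater_eq_one_minus_cdf:
  fixes X :: "'a \<Rightarrow> real"
  assumes "X \<in> borel_measurable M"
  shows "prob {x\<in>space M. t < X x} = 1 - cdf (distr M borel X) t"
proof -
  have "space M - {x\<in>space M. t < X x} = X -` {..t} \<inter> space M"
    by auto
  then show ?thesis
    using assms prob_compl[of "{x\<in>space M. t < X x}"] by (simp add: cdf_def measure_distr)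
qed

lemma distr_eq_if_prob_greater_eq:
  fixes X X' :: "'a \<Rightarrow> real"
  assumes "X' \<in> borel_measurable M" and "X \<in> borel_measurable M"
    and "\<And>t. prob {x\<in>space M. t < X' x} = prob {x\<in>space M. t < X x}"
  shows "distr M borel X' = distr M borel X"
  using assms by (intro cdf_unique) (auto simp: prob_greater_eq_one_minus_cdf)

lemma quantile_transform:
  fixes X U :: "'a \<Rightarrow> real"
  assumes X[measurable]: "X \<in> borel_measurable M" and U[measurable]: "U \<in> borel_measurable M"
    and U_unif: "\<And>a. 0 < a \<Longrightarrow> a \<le> 1 \<Longrightarrow> prob {x\<in>space M. U x < a} = a"
  obtains X' where "X' \<in> borel_measurable M" "distr M borel X' = distr M borel X"
    "\<And>t. AE x in M. t < X' x \<longleftrightarrow> U x < prob {x\<in>space M. t < X x}"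
proof -
  define \<mu> where "\<mu> = distr M borel X"
  interpret \<mu>: real_distribution \<mu>
    unfolding \<mu>_def by simp
  define G where "G t = prob {x\<in>space M. t < X x}" for t
  have prob_U_less: "prob {x\<in>space M. U x < a} = a" if "0 \<le> a" "a \<le> 1" for a
    by (rule uniform_unit_interval(1)[OF U]) (simp_all add: U_unif that)
  define good where "good x \<longleftrightarrow> 0 < U x \<and> U x < 1" for x
  have AE_good: "AE x in M. good x"
    unfolding good_def by (rule uniform_unit_interval(2)[OF U]) (simp add: U_unif)
  define X' where "X' x = (if good x then quantile \<mu> (1 - U x) else 0)" for x
  have less_X'_iff: "t < X' x \<longleftrightarrow> U x < G t" if "good x" for x t
  proof -
    have "0 < 1 - U x" "1 - U x < measure \<mu> (space \<mu>)"
      using that \<mu>.prob_space unfolding good_def by auto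
    from \<mu>.quantile_le_iff[OF this, of t] show ?thesis
      using that prob_greater_eq_one_minus_cdf[OF X, of t] unfolding X'_def G_def \<mu>_def by auto
  qed
  have X'_measurable: "X' \<in> borel_measurable M"
  proof (rule borel_measurableI_greater)
    fix t
    have "{x\<in>space M. t < X' x} = {x\<in>space M. (good x \<and> U x < G t) \<or> (\<not> good x \<and> t < 0)}"
      using less_X'_iff by (auto simp: X'_def)
    also have "\<dots> \<in> events"
      unfolding good_def by measurable
    finally show "{x\<in>space M. t < X' x} \<in> events" .
  qed
  have AE_less_X': "AE x in M. t < X' x \<longleftrightarrow> U x < G t" for t
    using AE_good by eventually_elim (rule less_X'_iff)
  have "prob {x\<in>space M. t < X' x} = prob {x\<in>space M. U x < G t}" for t
    using AE_less_X'[of t] X'_measurable by (intro prob_eq_AE) auto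
  also have "prob {x\<in>space M. U x < G t} = G t" for t
    unfolding G_def by (rule prob_U_less) auto
  finally have "distr M borel X' = distr M borel X"
    unfolding G_def by (intro distr_eq_if_prob_greater_eq X'_measurable X)
  from X'_measurable this AE_less_X'[unfolded G_def] show ?thesis
    by (rule that)
qed

end

text \<open>A weak form of counter-monotonicity of \<open>X\<close> and \<open>Z\<close>, in which ties of \<open>Z\<close> may be
  broken arbitrarily.\<close>
definition counter_monotone :: "'a measure \<Rightarrow> ('a \<Rightarrow> real) \<Rightarrow> ('a \<Rightarrow> real) \<Rightarrow> bool" where
  "counter_monotone M Z X \<longleftrightarrow> (\<forall>t. \<exists>L\<in>sets M. lower_set M Z L \<and> (AE x in M. x \<in> L \<longleftrightarrow> t < X x))"

lemma le_iff_less_minus_inverse_Suc: "s \<le> y \<longleftrightarrow> (\<forall>n. s - 1 / Suc n < y)" for s y :: real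
proof
  assume below: "\<forall>n. s - 1 / Suc n < y"
  show "s \<le> y"
  proof (rule ccontr)
    assume "\<not> s \<le> y"
    then obtain n where "1 / Suc n < s - y"
      using nat_approx_posE[of "s - y"] by auto
    with below[rule_format, of n] show False
      by linarith
  qed
next
  assume "s \<le> y"
  moreover have "s - 1 / Suc n < s" for n
    by simp
  ultimately show "\<forall>n. s - 1 / Suc n < y"
    by (meson less_le_trans)
qed

lemma counter_monotone_ge:
  assumes "counter_monotone M Z X"
  shows "\<exists>L\<in>sets M. lower_set M Z L \<and> (AE x in M. x \<in> L \<longleftrightarrow> s \<le> X x)"
proof -
  have "\<forall>n. \<exists>L. L \<in> sets M \<and> lower_set M Z L \<and> (AE x in M. x \<in> L \<longleftrightarrow> s - 1 / Suc n < X x)"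
    using assms unfolding counter_monotone_def by blast
  then obtain L where "\<forall>n. L n \<in> sets M \<and> lower_set M Z (L n) \<and>
      (AE x in M. x \<in> L n \<longleftrightarrow> s - 1 / Suc n < X x)"
    by (rule exE[OF choice])
  then have L: "\<And>n. L n \<in> sets M" "\<And>n. lower_set M Z (L n)"
      "\<And>n. AE x in M. x \<in> L n \<longleftrightarrow> s - 1 / Suc n < X x"
    by simp_all
  have "AE x in M. \<forall>n. x \<in> L n \<longleftrightarrow> s - 1 / Suc n < X x"
    using L(3) by (simp add: AE_all_countable)
  then have "AE x in M. x \<in> (\<Inter>n. L n) \<longleftrightarrow> s \<le> X x"
    by eventually_elim (simp add: le_iff_less_minus_inverse_Suc[of s])
  moreover have "(\<Inter>n. L n) \<in> sets M" "lower_set M Z (\<Inter>n. L n)"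
    using L by (auto intro: lower_set_INT)
  ultimately show ?thesis
    by blast
qed

context prob_space
begin

lemma exists_counter_monotone_rearrangement:
  fixes X Z :: "'a \<Rightarrow> real"
  assumes "atomless M" and Z: "Z \<in> borel_measurable M" and X: "X \<in> borel_measurable M"
  obtains X' where "X' \<in> borel_measurable M" "distr M borel X' = distr M borel X"
    "counter_monotone M Z X'"
proof -
  define U where "U = lower_rank M Z"
  have U: "U \<in> borel_measurable M"
    unfolding U_def using \<open>atomless M\<close> Z by (rule lower_rank_measurable)
  obtain X' where X': "X' \<in> borel_measurable M" "distr M borel X' = distr M borel X"
    "\<And>t. AE x in M. t < X' x \<longleftrightarrow> U x < prob {x\<in>space M. t < X x}"
    using quantile_transform[OF X U] prob_lower_rank_less[OF \<open>atomless M\<close> Z]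
    unfolding U_def by blast
  have lower: "lower_set M Z {x\<in>space M. U x < c}" for c
    using lower_rank_mono[OF \<open>atomless M\<close> Z] unfolding U_def by (rule lower_set_sublevel)
  have "counter_monotone M Z X'"
    unfolding counter_monotone_def
  proof
    fix t
    define c where "c = prob {x\<in>space M. t < X x}"
    have "AE x in M. x \<in> {x\<in>space M. U x < c} \<longleftrightarrow> t < X' x"
      using X'(3)[of t] AE_space unfolding c_def by eventually_elim auto
    moreover have "{x\<in>space M. U x < c} \<in> events"
      using U by measurable
    ultimately show "\<exists>L\<in>events. lower_set M Z L \<and> (AE x in M. x \<in> L \<longleftrightarrow> t < X' x)"
      using lower by (intro bexI[of _ "{x\<in>space M. U x < c}"] conjI)
  qed
  with X' that show ?thesis
    by blast
qed

end

section \<open>The bathtub principle\<close>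

lemma integrable_mult_unit_bound:
  fixes Z \<xi> :: "'a \<Rightarrow> real"
  assumes "integrable M Z" and "\<xi> \<in> borel_measurable M" and "AE x in M. \<bar>\<xi> x\<bar> \<le> 1"
  shows "integrable M (\<lambda>x. \<xi> x * Z x)"
proof (rule Bochner_Integration.integrable_bound[OF \<open>integrable M Z\<close>])
  show "AE x in M. norm (\<xi> x * Z x) \<le> norm (Z x)"
    using assms(3) by eventually_elim (auto simp: abs_mult intro!: mult_left_le_one_le)
qed (intro borel_measurable_times assms(2) borel_measurable_integrable[OF assms(1)])

context prob_space
begin

text \<open>\<open>L\<close> puts all its mass where \<open>Z\<close> is smallest, so no weight \<open>\<xi>\<close> with values in
  \<open>[0, 1]\<close> and the same total mass can give \<open>Z\<close> a smaller integral.\<close>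
lemma integral_le_if_separating_level:
  fixes Z \<xi> :: "'a \<Rightarrow> real"
  assumes L: "L \<in> events" and Z: "integrable M Z"
    and below: "\<And>x. x \<in> L \<Longrightarrow> Z x \<le> d" and above: "\<And>y. y \<in> space M - L \<Longrightarrow> d \<le> Z y"
    and \<xi>: "integrable M \<xi>" "AE x in M. 0 \<le> \<xi> x \<and> \<xi> x \<le> 1" "(\<integral>x. \<xi> x \<partial>M) = prob L"
    and \<xi>Z: "integrable M (\<lambda>x. \<xi> x * Z x)"
  shows "(\<integral>x. Z x * indicator L x \<partial>M) \<le> (\<integral>x. \<xi> x * Z x \<partial>M)"
proof -
  have "AE x in M. 0 \<le> (\<xi> x - indicator L x) * (Z x - d)"
    using \<xi>(2) AE_space
  proof eventually_elim
    case (elim x)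
    then show ?case
      using below[of x] above[of x]
      by (cases "x \<in> L") (auto intro: mult_nonpos_nonpos mult_nonneg_nonneg)
  qed
  then have "0 \<le> (\<integral>x. (\<xi> x - indicator L x) * (Z x - d) \<partial>M)"
    by (rule integral_nonneg_AE)
  also have "(\<integral>x. (\<xi> x - indicator L x) * (Z x - d) \<partial>M) =
      (\<integral>x. \<xi> x * Z x \<partial>M) - (\<integral>x. Z x * indicator L x \<partial>M) - d * ((\<integral>x. \<xi> x \<partial>M) - prob L)"
  proof -
    have "integrable M (indicator L :: 'a \<Rightarrow> real)"
      using L by (intro integrable_real_indicator) (auto simp: less_top[symmetric])
    moreover have "integrable M (\<lambda>x. Z x * indicator L x)"
      using L Z by (intro integrable_real_mult_indicator) auto
    moreover have "(\<lambda>x. (\<xi> x - indicator L x) * (Z x - d)) =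
        (\<lambda>x. (\<xi> x * Z x - Z x * indicator L x) - (d * \<xi> x - d * indicator L x))"
      by (auto simp: algebra_simps)
    ultimately show ?thesis
      using \<xi>Z \<xi>(1) L by (simp add: right_diff_distrib)
  qed
  finally show ?thesis
    using \<xi>(3) by simp
qed

lemma integral_lower_set_le:
  fixes Z \<xi> :: "'a \<Rightarrow> real"
  assumes L: "L \<in> events" "lower_set M Z L" and Z: "integrable M Z"
    and \<xi>: "integrable M \<xi>" "AE x in M. 0 \<le> \<xi> x \<and> \<xi> x \<le> 1" "(\<integral>x. \<xi> x \<partial>M) = prob L"
  shows "(\<integral>x. Z x * indicator L x \<partial>M) \<le> (\<integral>x. \<xi> x * Z x \<partial>M)"
proof -
  have "AE x in M. \<bar>\<xi> x\<bar> \<le> 1"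
    using \<xi>(2) by eventually_elim simp
  then have \<xi>Z: "integrable M (\<lambda>x. \<xi> x * Z x)"
    using Z \<xi>(1) by (intro integrable_mult_unit_bound) (auto simp: borel_measurable_integrable)
  have "L \<subseteq> space M"
    using L sets.sets_into_space by auto
  then consider "L = {}" | "L = space M" | x0 y0 where "x0 \<in> L" "y0 \<in> space M - L"
    by blast
  then show ?thesis
  proof cases
    case 1
    then have "AE x in M. \<xi> x = 0"
      using \<xi> by (subst integral_nonneg_eq_0_iff_AE[symmetric]) (auto elim: eventually_mono)
    then have "(\<integral>x. \<xi> x * Z x \<partial>M) = 0"
      by (intro integral_eq_zero_AE) (auto elim: eventually_mono)
    with 1 show ?thesis
      by simp
  next
    case 2
    then have "(\<integral>x. 1 - \<xi> x \<partial>M) = 0"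
      using \<xi> by (simp add: prob_space)
    then have "AE x in M. 1 - \<xi> x = 0"
      using \<xi> by (subst integral_nonneg_eq_0_iff_AE[symmetric]) (auto elim: eventually_mono)
    then have "(\<integral>x. \<xi> x * Z x \<partial>M) = (\<integral>x. Z x * indicator L x \<partial>M)"
      using \<xi>Z Z AE_space by (intro integral_cong_AE) (auto simp: 2 elim!: eventually_mono)
    then show ?thesis
      by simp
  next
    case 3
    have sep: "\<forall>x\<in>L. \<forall>y\<in>space M - L. Z x \<le> Z y"
      using L unfolding lower_set_def by blast
    then have "bdd_above (Z ` L)"
      using 3 by (intro bdd_aboveI[of _ "Z y0"]) blast
    then show ?thesis
      using 3 sep by (intro integral_le_if_separating_level[OF L(1) Z _ _ \<xi> \<xi>Z, of "Sup (Z ` L)"])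
        (auto intro: cSup_upper cSup_least)
  qed
qed

lemma finite_measure_subalgebraI: "subalgebra M G \<Longrightarrow> finite_measure_subalgebra M G"
  by (intro finite_measure_subalgebra.intro finite_measure_subalgebra_axioms.intro)
    (simp_all add: finite_measure_axioms)

lemma integral_lower_set_le_cond_exp:
  fixes Z :: "'a \<Rightarrow> real"
  assumes sub: "subalgebra M G" and Z: "integrable M Z"
    and L: "L \<in> events" "lower_set M Z L" and A: "A \<in> events" "prob L = prob A"
  shows "(\<integral>x. Z x * indicator L x \<partial>M) \<le> (\<integral>x. real_cond_exp M G Z x * indicator A x \<partial>M)"
proof -
  interpret G: finite_measure_subalgebra M G
    using sub by (rule finite_measure_subalgebraI)
  define \<xi> where "\<xi> = real_cond_exp M G (indicator A)"
  have A_int: "integrable M (indicator A :: 'a \<Rightarrow> real)"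
    using A by (intro integrable_real_indicator) (auto simp: less_top[symmetric])
  have \<xi>: "integrable M \<xi>" "(\<integral>x. \<xi> x \<partial>M) = prob L"
    unfolding \<xi>_def using G.real_cond_exp_int[OF A_int] A by auto
  have "AE x in M. 0 \<le> \<xi> x" "AE x in M. \<xi> x \<le> 1"
    unfolding \<xi>_def using A_int by (auto intro!: G.real_cond_exp_pos G.real_cond_exp_le_c)
  then have \<xi>01: "AE x in M. 0 \<le> \<xi> x \<and> \<xi> x \<le> 1"
    by eventually_elim simp
  have "AE x in M. \<bar>\<xi> x\<bar> \<le> 1"
    using \<xi>01 by eventually_elim simp
  then have \<xi>Z: "integrable M (\<lambda>x. \<xi> x * Z x)"
    using Z by (intro integrable_mult_unit_bound) (auto simp: \<xi>_def)
  have [measurable]: "Z \<in> borel_measurable M"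
    using Z by (rule borel_measurable_integrable)
  have W_int: "integrable M (real_cond_exp M G Z)"
    using Z by (rule G.real_cond_exp_int)
  have "(\<integral>x. \<xi> x * Z x \<partial>M) = (\<integral>x. \<xi> x * real_cond_exp M G Z x \<partial>M)"
    using \<xi>Z by (intro G.real_cond_exp_intg(2)[symmetric]) (auto simp: \<xi>_def)
  also have "\<dots> = (\<integral>x. real_cond_exp M G Z x * indicator A x \<partial>M)"
    unfolding \<xi>_def using A W_int
    by (subst mult.commute, intro G.real_cond_exp_intg(2))
      (auto intro: integrable_real_mult_indicator)
  finally show ?thesis
    using integral_lower_set_le[OF L Z \<xi>(1) \<xi>01 \<xi>(2)] by simp
qed

lemma integral_cond_exp_le_upper_set:
  fixes Z :: "'a \<Rightarrow> real"
  assumes sub: "subalgebra M G" and Z: "integrable M Z"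
    and K: "K \<in> events" "lower_set M Z (space M - K)" and A: "A \<in> events" "prob K = prob A"
  shows "(\<integral>x. real_cond_exp M G Z x * indicator A x \<partial>M) \<le> (\<integral>x. Z x * indicator K x \<partial>M)"
proof -
  interpret G: finite_measure_subalgebra M G
    using sub by (rule finite_measure_subalgebraI)
  have "K \<subseteq> space M"
    using K(1) sets.sets_into_space by blast
  then have "lower_set M (\<lambda>x. - Z x) K"
    using K(2) unfolding lower_set_def by auto
  then have "(\<integral>x. - Z x * indicator K x \<partial>M) \<le>
      (\<integral>x. real_cond_exp M G (\<lambda>x. - Z x) x * indicator A x \<partial>M)"
    using Z K A by (intro integral_lower_set_le_cond_exp[OF sub]) auto
  also have "\<dots> = (\<integral>x. - (real_cond_exp M G Z x * indicator A x) \<partial>M)"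
  proof (rule integral_cong_AE)
    show "AE x in M. real_cond_exp M G (\<lambda>x. - Z x) x * indicator A x =
        - (real_cond_exp M G Z x * indicator A x)"
      using G.real_cond_exp_cmult[OF Z, of "-1"] by eventually_elim simp
  qed (use A in measurable)
  finally show ?thesis
    by simp
qed

end

section \<open>Expectations under densities\<close>

lemma nn_integral_layer_cake:
  fixes f :: "'a \<Rightarrow> real" and g :: "'a \<Rightarrow> ennreal"
  assumes "sigma_finite_measure M"
    and [measurable]: "g \<in> borel_measurable M" "f \<in> borel_measurable M"
  shows "(\<integral>\<^sup>+x. g x * ennreal (max (f x) 0) \<partial>M) =
    (\<integral>\<^sup>+t. indicator {0..} t * (\<integral>\<^sup>+x. g x * indicator {x. t < f x} x \<partial>M) \<partial>lborel)"
proof -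
  interpret pair_sigma_finite M lborel
    by (intro pair_sigma_finite.intro assms(1) lborel.sigma_finite_measure_axioms)
  define F where "F x t = (if 0 \<le> t \<and> t < f x then g x else 0)" for x t
  have F_measurable: "(\<lambda>(x, t). F x t) \<in> borel_measurable (M \<Otimes>\<^sub>M lborel)"
    unfolding F_def by measurable
  have "(\<integral>\<^sup>+t. F x t \<partial>lborel) = g x * ennreal (max (f x) 0)" for x
  proof -
    have "(\<integral>\<^sup>+t. F x t \<partial>lborel) = (\<integral>\<^sup>+t. g x * indicator {0..<max (f x) 0} t \<partial>lborel)"
      unfolding F_def by (intro nn_integral_cong) (auto simp: indicator_def)
    then show ?thesis
      by (simp add: nn_integral_cmult)
  qed
  then have "(\<integral>\<^sup>+x. g x * ennreal (max (f x) 0) \<partial>M) = (\<integral>\<^sup>+x. \<integral>\<^sup>+t. F x t \<partial>lborel \<partial>M)"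
    by simp
  also have "\<dots> = (\<integral>\<^sup>+t. \<integral>\<^sup>+x. F x t \<partial>M \<partial>lborel)"
    by (rule Fubini'[OF F_measurable, symmetric])
  also have "\<dots> = (\<integral>\<^sup>+t. indicator {0..} t * (\<integral>\<^sup>+x. g x * indicator {x. t < f x} x \<partial>M) \<partial>lborel)"
    unfolding F_def by (intro nn_integral_cong) (auto intro!: nn_integral_cong simp: indicator_def)
  finally show ?thesis .
qed

lemma expQ_mono:
  assumes "(\<integral>\<^sup>+x. ennreal (Z x * max (X' x) 0) \<partial>M) \<le> (\<integral>\<^sup>+x. ennreal (W x * max (X x) 0) \<partial>M)"
    and "(\<integral>\<^sup>+x. ennreal (W x * max (- X x) 0) \<partial>M) \<le> (\<integral>\<^sup>+x. ennreal (Z x * max (- X' x) 0) \<partial>M)"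
  shows "expQ M Z X' \<le> expQ M W X"
proof -
  define pZ nZ pW nW where
    "pZ = (\<integral>\<^sup>+x. ennreal (Z x * max (X' x) 0) \<partial>M)"
    and "nZ = (\<integral>\<^sup>+x. ennreal (Z x * max (- X' x) 0) \<partial>M)"
    and "pW = (\<integral>\<^sup>+x. ennreal (W x * max (X x) 0) \<partial>M)"
    and "nW = (\<integral>\<^sup>+x. ennreal (W x * max (- X x) 0) \<partial>M)"
  have "pZ \<le> pW" "nW \<le> nZ"
    using assms unfolding pZ_def pW_def nZ_def nW_def by simp_all
  show ?thesis
  proof (cases "nZ = \<infinity>")
    case False
    with \<open>nW \<le> nZ\<close> have "nW \<noteq> \<infinity>"
      by (auto simp: top_unique)
    have "enn2ereal pZ - enn2ereal nZ \<le> enn2ereal pW - enn2ereal nW"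
      using \<open>pZ \<le> pW\<close> \<open>nW \<le> nZ\<close> by (intro ereal_minus_mono) (simp_all add: less_eq_ennreal.rep_eq)
    with False \<open>nW \<noteq> \<infinity>\<close> show ?thesis
      unfolding expQ_def Let_def pZ_def nZ_def pW_def nW_def by simp
  qed (simp add: expQ_def nZ_def)
qed

context prob_space
begin

lemma nn_integral_indicator_eq_integral:
  fixes h :: "'a \<Rightarrow> real"
  assumes "integrable M h" and "AE x in M. 0 \<le> h x" and "S \<in> events"
  shows "(\<integral>\<^sup>+x. ennreal (h x) * indicator S x \<partial>M) = ennreal (\<integral>x. h x * indicator S x \<partial>M)"
proof -
  have "(\<integral>\<^sup>+x. ennreal (h x) * indicator S x \<partial>M) = (\<integral>\<^sup>+x. ennreal (h x * indicator S x) \<partial>M)"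
    by (intro nn_integral_cong) (auto simp: indicator_def)
  also have "\<dots> = ennreal (\<integral>x. h x * indicator S x \<partial>M)"
    using assms(2) by (intro nn_integral_eq_integral integrable_real_mult_indicator assms(1,3))
      (auto elim: eventually_mono simp: indicator_def)
  finally show ?thesis .
qed

lemma nn_integral_lower_set_le_cond_exp:
  fixes Z :: "'a \<Rightarrow> real"
  assumes sub: "subalgebra M G" and Z: "Z \<in> densities M"
    and L: "L \<in> events" "lower_set M Z L"
    and S: "S \<in> events" "AE x in M. x \<in> L \<longleftrightarrow> x \<in> S" and A: "A \<in> events" "prob S = prob A"
  shows "(\<integral>\<^sup>+x. ennreal (Z x) * indicator S x \<partial>M) \<le>
    (\<integral>\<^sup>+x. ennreal (real_cond_exp M G Z x) * indicator A x \<partial>M)"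
proof -
  interpret G: finite_measure_subalgebra M G
    using sub by (rule finite_measure_subalgebraI)
  have Z_int: "integrable M Z" and Z_nonneg: "AE x in M. 0 \<le> Z x"
    using Z unfolding densities_def by auto
  have "prob L = prob S"
    using L S by (intro measure_eq_AE) auto
  have "(\<integral>\<^sup>+x. ennreal (Z x) * indicator S x \<partial>M) = (\<integral>\<^sup>+x. ennreal (Z x) * indicator L x \<partial>M)"
    using S(2) by (intro nn_integral_cong_AE) (auto elim!: eventually_mono simp: indicator_def)
  also have "\<dots> = ennreal (\<integral>x. Z x * indicator L x \<partial>M)"
    using Z_int Z_nonneg L(1) by (rule nn_integral_indicator_eq_integral)
  also have "\<dots> \<le> ennreal (\<integral>x. real_cond_exp M G Z x * indicator A x \<partial>M)"
    using integral_lower_set_le_cond_exp[OF sub Z_int L A(1)] \<open>prob L = prob S\<close> A(2)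
    by (intro ennreal_leI) simp
  also have "\<dots> = (\<integral>\<^sup>+x. ennreal (real_cond_exp M G Z x) * indicator A x \<partial>M)"
    using Z_int Z_nonneg A(1)
    by (intro nn_integral_indicator_eq_integral[symmetric] G.real_cond_exp_int G.real_cond_exp_pos)
      auto
  finally show ?thesis .
qed

lemma nn_integral_cond_exp_le_upper_set:
  fixes Z :: "'a \<Rightarrow> real"
  assumes sub: "subalgebra M G" and Z: "Z \<in> densities M"
    and K: "K \<in> events" "lower_set M Z (space M - K)"
    and S: "S \<in> events" "AE x in M. x \<in> K \<longleftrightarrow> x \<in> S" and A: "A \<in> events" "prob S = prob A"
  shows "(\<integral>\<^sup>+x. ennreal (real_cond_exp M G Z x) * indicator A x \<partial>M) \<le>
    (\<integral>\<^sup>+x. ennreal (Z x) * indicator S x \<partial>M)"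
proof -
  interpret G: finite_measure_subalgebra M G
    using sub by (rule finite_measure_subalgebraI)
  have Z_int: "integrable M Z" and Z_nonneg: "AE x in M. 0 \<le> Z x"
    using Z unfolding densities_def by auto
  have "prob K = prob S"
    using K S by (intro measure_eq_AE) auto
  have "(\<integral>\<^sup>+x. ennreal (real_cond_exp M G Z x) * indicator A x \<partial>M) =
      ennreal (\<integral>x. real_cond_exp M G Z x * indicator A x \<partial>M)"
    using Z_int Z_nonneg A(1)
    by (intro nn_integral_indicator_eq_integral G.real_cond_exp_int G.real_cond_exp_pos) auto
  also have "\<dots> \<le> ennreal (\<integral>x. Z x * indicator K x \<partial>M)"
    using integral_cond_exp_le_upper_set[OF sub Z_int K A(1)] \<open>prob K = prob S\<close> A(2)
    by (intro ennreal_leI) simp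
  also have "\<dots> = (\<integral>\<^sup>+x. ennreal (Z x) * indicator K x \<partial>M)"
    using Z_int Z_nonneg K(1) by (rule nn_integral_indicator_eq_integral[symmetric])
  also have "\<dots> = (\<integral>\<^sup>+x. ennreal (Z x) * indicator S x \<partial>M)"
    using S(2) by (intro nn_integral_cong_AE) (auto elim!: eventually_mono simp: indicator_def)
  finally show ?thesis .
qed

lemma prob_eq_if_distr_eq:
  fixes X X' :: "'a \<Rightarrow> real"
  assumes "X \<in> borel_measurable M" "X' \<in> borel_measurable M"
    and "distr M borel X' = distr M borel X" and "B \<in> sets borel"
  shows "prob {x\<in>space M. X' x \<in> B} = prob {x\<in>space M. X x \<in> B}"
  using assms measure_distr[of X' M borel B] measure_distr[of X M borel B]
  by (simp add: vimage_def Int_def conj_commute)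

lemma nn_integral_superlevel_le_cond_exp:
  fixes X X' Z :: "'a \<Rightarrow> real"
  assumes sub: "subalgebra M G" and Z: "Z \<in> densities M"
    and X[measurable]: "X \<in> borel_measurable M" and X'[measurable]: "X' \<in> borel_measurable M"
    and law: "distr M borel X' = distr M borel X" and cm: "counter_monotone M Z X'"
  shows "(\<integral>\<^sup>+x. ennreal (Z x) * indicator {x. t < X' x} x \<partial>M) \<le>
    (\<integral>\<^sup>+x. ennreal (real_cond_exp M G Z x) * indicator {x. t < X x} x \<partial>M)"
proof -
  obtain L where L: "L \<in> events" "lower_set M Z L" "AE x in M. x \<in> L \<longleftrightarrow> t < X' x"
    using cm unfolding counter_monotone_def by blast
  have "prob {x\<in>space M. t < X' x} = prob {x\<in>space M. t < X x}"
    using prob_eq_if_distr_eq[OF X X' law, of "{t<..}"] by simp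
  moreover have "AE x in M. x \<in> L \<longleftrightarrow> x \<in> {x\<in>space M. t < X' x}"
    using L(3) AE_space by eventually_elim auto
  ultimately have "(\<integral>\<^sup>+x. ennreal (Z x) * indicator {x\<in>space M. t < X' x} x \<partial>M) \<le>
      (\<integral>\<^sup>+x. ennreal (real_cond_exp M G Z x) * indicator {x\<in>space M. t < X x} x \<partial>M)"
    by (intro nn_integral_lower_set_le_cond_exp[OF sub Z L(1,2)]) auto
  then show ?thesis
    by (simp add: indicator_def cong: nn_integral_cong_simp)
qed

lemma nn_integral_cond_exp_le_sublevel:
  fixes X X' Z :: "'a \<Rightarrow> real"
  assumes sub: "subalgebra M G" and Z: "Z \<in> densities M"
    and X[measurable]: "X \<in> borel_measurable M" and X'[measurable]: "X' \<in> borel_measurable M"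
    and law: "distr M borel X' = distr M borel X" and cm: "counter_monotone M Z X'"
  shows "(\<integral>\<^sup>+x. ennreal (real_cond_exp M G Z x) * indicator {x. t < - X x} x \<partial>M) \<le>
    (\<integral>\<^sup>+x. ennreal (Z x) * indicator {x. t < - X' x} x \<partial>M)"
proof -
  obtain L where L: "L \<in> events" "lower_set M Z L" "AE x in M. x \<in> L \<longleftrightarrow> - t \<le> X' x"
    using counter_monotone_ge[OF cm] by blast
  have "L \<subseteq> space M"
    using L(1) sets.sets_into_space by blast
  then have "lower_set M Z (space M - (space M - L))"
    using L(2) by (simp add: Diff_Diff_Int Int_absorb1)
  moreover have "prob {x\<in>space M. t < - X' x} = prob {x\<in>space M. t < - X x}"
    using prob_eq_if_distr_eq[OF X X' law, of "{..< -t}"] by (simp add: less_minus_iff)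
  moreover have "AE x in M. x \<in> space M - L \<longleftrightarrow> x \<in> {x\<in>space M. t < - X' x}"
    using L(3) AE_space by eventually_elim auto
  ultimately have "(\<integral>\<^sup>+x. ennreal (real_cond_exp M G Z x) * indicator {x\<in>space M. t < - X x} x \<partial>M) \<le>
      (\<integral>\<^sup>+x. ennreal (Z x) * indicator {x\<in>space M. t < - X' x} x \<partial>M)"
    using L(1) by (intro nn_integral_cond_exp_le_upper_set[OF sub Z]) auto
  then show ?thesis
    by (simp add: indicator_def cong: nn_integral_cong_simp)
qed

lemma expQ_counter_monotone_le_cond_exp:
  fixes X X' Z :: "'a \<Rightarrow> real"
  assumes sub: "subalgebra M G" and Z: "Z \<in> densities M"
    and X: "X \<in> borel_measurable M" and X': "X' \<in> borel_measurable M"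
    and law: "distr M borel X' = distr M borel X" and cm: "counter_monotone M Z X'"
  shows "expQ M Z X' \<le> expQ M (real_cond_exp M G Z) X"
proof -
  have Z_meas: "Z \<in> borel_measurable M" and W_meas: "real_cond_exp M G Z \<in> borel_measurable M"
    using Z unfolding densities_def by auto
  have mult: "ennreal (a * max b 0) = ennreal a * ennreal (max b 0)" for a b :: real
    by (rule ennreal_mult'') simp
  have layer: "(\<integral>\<^sup>+x. ennreal (V x * max (Y x) 0) \<partial>M) =
      (\<integral>\<^sup>+t. indicator {0..} t * (\<integral>\<^sup>+x. ennreal (V x) * indicator {x. t < Y x} x \<partial>M) \<partial>lborel)"
    if [measurable]: "V \<in> borel_measurable M" "Y \<in> borel_measurable M" for V Y :: "'a \<Rightarrow> real"
    unfolding mult by (rule nn_integral_layer_cake[OF sigma_finite_measure_axioms]) simp_all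
  note superlevel = nn_integral_superlevel_le_cond_exp[OF assms]
  note sublevel = nn_integral_cond_exp_le_sublevel[OF assms]
  show ?thesis
  proof (rule expQ_mono)
    show "(\<integral>\<^sup>+x. ennreal (Z x * max (X' x) 0) \<partial>M) \<le>
        (\<integral>\<^sup>+x. ennreal (real_cond_exp M G Z x * max (X x) 0) \<partial>M)"
      unfolding layer[OF Z_meas X'] layer[OF W_meas X]
      by (intro nn_integral_mono mult_left_mono[OF superlevel]) simp
    show "(\<integral>\<^sup>+x. ennreal (real_cond_exp M G Z x * max (- X x) 0) \<partial>M) \<le>
        (\<integral>\<^sup>+x. ennreal (Z x * max (- X' x) 0) \<partial>M)"
      unfolding layer[OF W_meas borel_measurable_uminus[OF X]]
        layer[OF Z_meas borel_measurable_uminus[OF X']]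
      by (intro nn_integral_mono mult_left_mono[OF sublevel]) simp
  qed
qed

lemma cond_exp_mem_determining_set:
  assumes "atomless M" and "law_invariant M u" and sub: "subalgebra M G"
    and Z: "Z \<in> determining_set M u"
  shows "real_cond_exp M G Z \<in> determining_set M u"
proof -
  interpret G: finite_measure_subalgebra M G
    using sub by (rule finite_measure_subalgebraI)
  have Z_dens: "Z \<in> densities M" and Z_le: "\<And>X. X \<in> borel_measurable M \<Longrightarrow> u X \<le> expQ M Z X"
    using Z unfolding determining_set_def by auto
  then have Z_int: "integrable M Z" and "AE x in M. 0 \<le> Z x" "(\<integral>x. Z x \<partial>M) = 1"
    unfolding densities_def by auto
  moreover have "AE x in M. 0 \<le> real_cond_exp M G Z x"
    using \<open>AE x in M. 0 \<le> Z x\<close> borel_measurable_integrable[OF Z_int] by (rule G.real_cond_exp_pos)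
  ultimately have "real_cond_exp M G Z \<in> densities M"
    unfolding densities_def using G.real_cond_exp_int[OF Z_int] by auto
  moreover have "u X \<le> expQ M (real_cond_exp M G Z) X" if X: "X \<in> borel_measurable M" for X
  proof -
    obtain X' where X': "X' \<in> borel_measurable M" "distr M borel X' = distr M borel X"
      "counter_monotone M Z X'"
      using exists_counter_monotone_rearrangement[OF \<open>atomless M\<close> _ X] Z_dens
      unfolding densities_def by blast
    have "u X = u X'"
      using \<open>law_invariant M u\<close> X X' unfolding law_invariant_def by metis
    also have "\<dots> \<le> expQ M Z X'"
      by (rule Z_le[OF X'(1)])
    also have "\<dots> \<le> expQ M (real_cond_exp M G Z) X"
      by (rule expQ_counter_monotone_le_cond_exp[OF sub Z_dens X X'])
    finally show ?thesis .
  qed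
  ultimately show ?thesis
    unfolding determining_set_def by blast
qed

end

theorem corollaryA2:
  fixes M :: "'a measure" and u :: "('a \<Rightarrow> real) \<Rightarrow> ereal"
    and Y :: "'a \<Rightarrow> 'b::euclidean_space"
  assumes "prob_space M" and "atomless M"
    and "coherent_utility M u" and "law_invariant M u"
    and "Y \<in> borel_measurable M"
  shows "(\<lambda>Z. real_cond_exp M (vimage_algebra (space M) Y borel) Z) ` determining_set M u
           \<subseteq> determining_set M u"
proof -
  interpret prob_space M
    by (rule assms(1))
  have "subalgebra M (vimage_algebra (space M) Y borel)"
    using assms(5) by (simp add: subalgebra_def measurable_iff_sets)
  with assms(2,4) show ?thesis
    by (auto intro: cond_exp_mem_determining_set)
qed

end
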